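(* Let $n\ge4$, $0<\alpha_2,\alpha_3<1$, $\alpha_1=1-\alpha_2-\alpha_3$, $\lambda^*=\big(\frac{n-1+\alpha_1}{n},\frac{\alpha_2}{n},\frac{\alpha_3}{n}\big)$. Define $$\sigma_1=\sum_{i_1=0}^{n-4}\Big(\sum_{i_2=1}^{\lfloor (n-i_1-1)/2\rfloor}|l_{(i_1,i_2,n-i_1-i_2)}(\lambda^* )|+\frac{1-\varepsilon(i_1)}{2}\mathfrak{p}(i_1)\Big),$$ $$\sigma_2=\sum_{i_1=0}^{n-4}\Big(\sum_{i_3=1}^{\lfloor (n-i_1-1)/2\rfloor}|l_{(i_1,n-i_1-i_3,i_3)}(\lambda^* )|+\frac{1-\varepsilon(i_1)}{2}\mathfrak{p}(i_1)\Big).$$ Then for $s=1,2$, $$\sigma_s\le\frac{C_0}{e(\ln n-1)}\sum_{i_1=0}^{n-4}\binom{n}{n-i_1}\frac{1}{n-i_1-1},\qquad C_0=\frac{(\ln2)^2+12\ln2+28}{4\ln2+12}<2.5.$$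
   Context: For an integer $n\ge1$ let $I=\{i=(i_1,i_2,i_3)\in\mathbb{Z}_+^3: i_1+i_2+i_3=n\}$ and $l_i(\lambda)=\prod_{s=1}^{3}\frac{1}{i_s!}\prod_{t=0}^{i_s-1}(n\lambda_s-t)$ for $\lambda=(\lambda_1,\lambda_2,\lambda_3)$ (Lagrange fundamental polynomials for the equally spaced nodes $i/n$ of a triangle in barycentric coordinates). For an integer $i_1$, $\varepsilon(i_1)=0$ if $n-i_1$ is even and $\varepsilon(i_1)=1$ otherwise; when $n-i_1$ is even, $\mathfrak{p}(i_1)=|l_i(\lambda^* )|$ with $i=\big(i_1,\frac{n-i_1}{2},\frac{n-i_1}{2}\big)$ (the term with factor $1-\varepsilon(i_1)=0$ is absent when $n-i_1$ is odd). *)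

theory Defs
  imports Complex_Main
begin

text \<open>One-variable factor of the Lagrange fundamental polynomial:
  (1/k!) * prod_{t=0}^{k-1} (n x - t).\<close>
definition lfac :: "nat \<Rightarrow> nat \<Rightarrow> real \<Rightarrow> real" where
  "lfac n k x = (\<Prod>t<k. real n * x - real t) / fact k"

text \<open>l_i(lambda) for i = (i1,i2,i3), lambda = (l1,l2,l3) in barycentric coordinates.\<close>
definition lagr :: "nat \<Rightarrow> nat \<times> nat \<times> nat \<Rightarrow> real \<times> real \<times> real \<Rightarrow> real" where
  "lagr n i lam = (case i of (i1, i2, i3) \<Rightarrow> case lam of (l1, l2, l3) \<Rightarrow>
      lfac n i1 l1 * lfac n i2 l2 * lfac n i3 l3)"

definition eps :: "nat \<Rightarrow> nat \<Rightarrow> real" where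
  "eps n i1 = (if even (n - i1) then 0 else 1)"

text \<open>p(i1) = |l_(i1,(n-i1)/2,(n-i1)/2)(lambda)| when n - i1 is even; the term is absent
  (taken as 0) when n - i1 is odd.\<close>
definition pfrak :: "nat \<Rightarrow> real \<times> real \<times> real \<Rightarrow> nat \<Rightarrow> real" where
  "pfrak n lam i1 = (if even (n - i1)
      then \<bar>lagr n (i1, (n - i1) div 2, (n - i1) div 2) lam\<bar> else 0)"

end

theory Submission
  imports Defs
begin

text \<open>
  With lambda* = ((n - a - b)/n, a/n, b/n) the Lagrange polynomial factorises into generalised
  binomial coefficients, l_(i,j,k)(lambda*) = (n - a - b gchoose i) (a gchoose j) (b gchoose k).
  For 0 < a <= 1 the weights |a gchoose j|, j >= 1, have total mass at most 1 (their partial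
  sums telescope), while |b gchoose k| <= b k^(-1-b) and
  |n - s gchoose i| <= (n choose i) ((n - i + 1)/(n + 1))^s.
  In row i only j <= (n - i)/2 occurs, so k = n - i - j >= (n - i)/2, and the product of the
  first and third factors is at most (n choose i)/k * b x^(-b) with x = k (n + 1)/(n - i + 1),
  which is >= n/e; finally b x^(-b) <= 1/(e ln x) removes the dependence on b.  Averaging over j
  against the weights |a gchoose j| bounds row i by 2 (n choose i)/((n - i) e (ln n - 1)),
  which is below the stated bound because C0 >= 2.
\<close>

lemma lfac_eq_gbinomial: "lfac n k x = (real n * x) gchoose k"
  by (simp add: lfac_def gbinomial_prod_rev atLeast0LessThan)

lemma gbinomial_Suc_right:
  "(a :: 'a :: field_char_0) gchoose Suc k = (a gchoose k) * (a - of_nat k) / of_nat (Suc k)"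
  by (simp add: gbinomial_prod_rev fact_Suc field_simps del: of_nat_Suc)

lemma abs_gbinomial_Suc_right:
  fixes a :: real
  assumes "a \<le> real k"
  shows "\<bar>a gchoose Suc k\<bar> = \<bar>a gchoose k\<bar> * (real k - a) / (real k + 1)"
  using assms by (simp add: gbinomial_Suc_right abs_mult abs_of_nonpos)

lemma one_minus_div_mult_powr_le_1:
  fixes s x :: real
  assumes "0 < x" "0 \<le> s"
  shows "(1 - s / x) * ((x + 1) / x) powr s \<le> 1"
proof -
  have "ln ((x + 1) / x) \<le> 1 / x"
    using assms ln_add_one_self_le_self[of "1 / x"] by (simp add: add_divide_distrib)
  then have "s * ln ((x + 1) / x) \<le> s * (1 / x)"
    using assms by (intro mult_left_mono)
  then have "((x + 1) / x) powr s \<le> exp (s / x)"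
    using assms by (simp add: powr_def)
  then have "(1 - s / x) * ((x + 1) / x) powr s \<le> exp (- (s / x)) * exp (s / x)"
    by (cases "s \<le> x") (auto intro!: mult_mono simp: exp_minus_ge mult_nonpos_nonneg
        elim: order.trans[rotated])
  then show ?thesis by (simp add: exp_minus)
qed

lemma abs_gbinomial_le_powr:
  fixes a :: real
  assumes a: "0 \<le> a" "a \<le> 1" and k: "1 \<le> k"
  shows "\<bar>a gchoose k\<bar> \<le> a / real k * real k powr (- a)"
  using k
proof (induction k rule: dec_induct)
  case base
  then show ?case using a by simp
next
  case (step k)
  define x where "x = real k"
  have x: "1 \<le> x" using step.hyps unfolding x_def by simp
  have shift: "x powr (- a) = (x + 1) powr (- a) * ((x + 1) / x) powr a"
    using x by (simp add: powr_divide powr_minus field_simps)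
  have "\<bar>a gchoose Suc k\<bar> = \<bar>a gchoose k\<bar> * (x - a) / (x + 1)"
    using a x unfolding x_def by (simp add: abs_gbinomial_Suc_right)
  also have "\<dots> \<le> a / x * x powr (- a) * (x - a) / (x + 1)"
    using step.IH a x unfolding x_def by (intro divide_right_mono mult_right_mono) auto
  also have "\<dots> = a / (x + 1) * (x + 1) powr (- a) * ((1 - a / x) * ((x + 1) / x) powr a)"
    using x by (simp add: shift field_simps)
  also have "\<dots> \<le> a / (x + 1) * (x + 1) powr (- a)"
    using a x one_minus_div_mult_powr_le_1[of x a] by (intro mult_right_le_one_le) auto
  finally show ?case unfolding x_def by (simp add: add.commute)
qed

lemma sum_abs_gbinomial_eq:
  fixes a :: real
  assumes a: "0 < a" "a \<le> 1" and K: "1 \<le> K"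
  shows "(\<Sum>k = 1..K. \<bar>a gchoose k\<bar>) = 1 - \<bar>a gchoose K\<bar> * (real K - a) / a"
  using K
proof (induction K rule: dec_induct)
  case base
  then show ?case using a by (simp add: field_simps)
next
  case (step K)
  define g where "g = \<bar>a gchoose K\<bar>"
  have Suc_term: "\<bar>a gchoose Suc K\<bar> = g * (real K - a) / (real K + 1)"
    using a step.hyps unfolding g_def by (intro abs_gbinomial_Suc_right) simp
  have "(\<Sum>k = 1..Suc K. \<bar>a gchoose k\<bar>) = 1 - g * (real K - a) / a + g * (real K - a) / (real K + 1)"
    using step.IH step.hyps by (simp add: Suc_term g_def)
  also have "\<dots> = 1 - g * (real K - a) / (real K + 1) * (real (Suc K) - a) / a"
    using a by (simp add: divide_simps) (simp add: algebra_simps)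
  finally show ?case by (simp add: Suc_term)
qed

lemma sum_abs_gbinomial_le_1:
  fixes a :: real
  assumes a: "0 < a" "a \<le> 1"
  shows "(\<Sum>k = 1..K. \<bar>a gchoose k\<bar>) \<le> 1"
proof (cases "K = 0")
  case False
  then have "0 \<le> \<bar>a gchoose K\<bar> * (real K - a) / a" using a by simp
  then show ?thesis using sum_abs_gbinomial_eq[OF a] False by simp
qed simp

lemma binomial_Suc_right_real:
  "real (n choose Suc k) = real (n choose k) * (real n - real k) / (real k + 1)"
  by (simp add: binomial_gbinomial gbinomial_Suc_right add.commute)

lemma abs_gbinomial_diff_le_powr:
  fixes s :: real
  assumes s: "0 \<le> s" "s \<le> 2" and i: "i < n"
  shows "\<bar>(real n - s) gchoose i\<bar> \<le> real (n choose i) * ((real (n - i) + 1) / (real n + 1)) powr s"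
  using i
proof (induction i)
  case 0
  then show ?case by simp
next
  case (Suc i)
  define A where "A = real n - real i"
  have A: "2 \<le> A" "real (n - Suc i) + 1 = A" "real (n - i) + 1 = A + 1"
    using Suc.prems unfolding A_def by (auto simp: of_nat_diff)
  have split: "((A + 1) / (real n + 1)) powr s = (A / (real n + 1)) powr s * ((A + 1) / A) powr s"
    using A by (simp add: powr_divide field_simps)
  have "\<bar>(real n - s) gchoose Suc i\<bar> = \<bar>(real n - s) gchoose i\<bar> * (A - s) / (real i + 1)"
    using A s unfolding A_def by (simp add: gbinomial_Suc_right abs_mult add.commute)
  also have "\<dots> \<le> real (n choose i) * ((A + 1) / (real n + 1)) powr s * (A - s) / (real i + 1)"
    using Suc A s by (intro divide_right_mono mult_right_mono) auto
  also have "\<dots> = real (n choose i) * A / (real i + 1) * (A / (real n + 1)) powr s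
                   * ((1 - s / A) * ((A + 1) / A) powr s)"
    unfolding split using A(1) by (simp add: divide_simps)
  also have "\<dots> \<le> real (n choose i) * A / (real i + 1) * (A / (real n + 1)) powr s"
    using A s one_minus_div_mult_powr_le_1[of A s] by (intro mult_right_le_one_le) auto
  also have "\<dots> = real (n choose Suc i) * ((real (n - Suc i) + 1) / (real n + 1)) powr s"
    unfolding A(2) by (simp add: binomial_Suc_right_real A_def)
  finally show ?case .
qed

lemma mult_powr_neg_le:
  fixes b x :: real
  assumes "0 < b" "1 < x"
  shows "b * x powr (- b) \<le> 1 / (exp 1 * ln x)"
proof -
  define t where "t = b * ln x"
  have t: "0 < t" "0 < ln x" using assms unfolding t_def by auto
  have "t \<le> exp (t - 1)" using exp_ge_add_one_self[of "t - 1"] by simp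
  then have "t * exp (- t) \<le> 1 / exp 1" by (simp add: exp_diff exp_minus field_simps)
  moreover have "b * x powr (- b) = t * exp (- t) / ln x"
    using assms t unfolding t_def by (simp add: powr_def)
  ultimately have "b * x powr (- b) \<le> 1 / exp 1 / ln x"
    using t(2) by (metis divide_right_mono less_imp_le)
  then show ?thesis by simp
qed

lemma one_less_ln:
  fixes x :: real
  assumes "exp 1 < x"
  shows "1 < ln x"
proof -
  have "0 < x" using assms exp_gt_zero[of 1] by linarith
  then show ?thesis using assms ln_less_cancel_iff[of "exp 1" x] by simp
qed

lemma ln_sub_one_le_ln_ratio:
  fixes k m N :: real
  assumes m: "4 \<le> m" "m \<le> 2 * k" and N: "0 < N"
  shows "ln N - 1 \<le> ln (k * (N + 1) / (m + 1))"
proof -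
  have "4 * N \<le> m * N" using m N by (intro mult_right_mono) auto
  then have "N * (m + 1) \<le> 5 / 4 * m * (N + 1)"
    using m by (simp add: algebra_simps)
  also have "\<dots> \<le> k * (N + 1) * (5 / 2)" using m N by simp
  also have "\<dots> \<le> k * (N + 1) * exp 1"
    using exp_lower_Taylor_quadratic[of 1] m N by (intro mult_left_mono) auto
  finally have "N / exp 1 \<le> k * (N + 1) / (m + 1)" using m by (simp add: field_simps)
  moreover have "0 < N / exp 1" using N by simp
  ultimately have "ln (N / exp 1) \<le> ln (k * (N + 1) / (m + 1))" by (subst ln_le_cancel_iff) auto
  then show ?thesis using N by (simp add: ln_div)
qed

lemma abs_gbinomial_corner_le:
  fixes a b :: real
  assumes n: "i + 4 \<le> n" and k: "real (n - i) \<le> 2 * real k"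
    and a: "0 \<le> a" and b: "0 < b" "b \<le> 1" and ab: "a + b \<le> 2"
  shows "\<bar>(real n - (a + b)) gchoose i\<bar> * \<bar>b gchoose k\<bar>
    \<le> 2 * real (n choose i) / (real (n - i) * exp 1 * (ln (real n) - 1))"
proof -
  define m where "m = real (n - i)"
  define r where "r = (m + 1) / (real n + 1)"
  define x where "x = real k / r"
  have m: "4 \<le> m" "m \<le> real n" using n unfolding m_def by auto
  have k2: "2 \<le> real k" using k m unfolding m_def by linarith
  have r: "0 < r" "r \<le> 1" using m unfolding r_def by auto
  have ln_n: "0 < ln (real n) - 1" using exp_le m by (simp add: one_less_ln)
  have ln_x: "ln (real n) - 1 \<le> ln x"
    using ln_sub_one_le_ln_ratio[of m "real k" "real n"] m k unfolding x_def r_def m_def by simp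
  have x: "1 < x"
  proof -
    have "0 < x" "0 < ln x" using ln_x ln_n r k2 unfolding x_def by auto
    then show ?thesis by simp
  qed
  have F: "\<bar>(real n - (a + b)) gchoose i\<bar> \<le> real (n choose i) * r powr b"
  proof -
    have "\<bar>(real n - (a + b)) gchoose i\<bar> \<le> real (n choose i) * r powr (a + b)"
      using abs_gbinomial_diff_le_powr[of "a + b" i n] a b ab n unfolding r_def m_def by simp
    also have "\<dots> \<le> real (n choose i) * r powr b"
      using r a by (intro mult_left_mono powr_mono') auto
    finally show ?thesis .
  qed
  have G: "\<bar>b gchoose k\<bar> \<le> b / real k * real k powr (- b)"
    using abs_gbinomial_le_powr[of b k] b k2 by simp
  have "\<bar>(real n - (a + b)) gchoose i\<bar> * \<bar>b gchoose k\<bar>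
      \<le> real (n choose i) * r powr b * (b / real k * real k powr (- b))"
    using F G by (intro mult_mono) auto
  also have "\<dots> = real (n choose i) / real k * (b * x powr (- b))"
    using r k2 unfolding x_def by (simp add: powr_divide powr_minus field_simps)
  also have "\<dots> \<le> real (n choose i) / real k * (1 / (exp 1 * ln x))"
    using mult_powr_neg_le[OF b(1) x] by (intro mult_left_mono) auto
  also have "\<dots> = real (n choose i) / (real k * (exp 1 * ln x))" by simp
  also have "\<dots> \<le> real (n choose i) / (m / 2 * (exp 1 * (ln (real n) - 1)))"
    using k ln_x ln_n m unfolding m_def by (intro divide_left_mono mult_mono mult_pos_pos) auto
  also have "\<dots> = 2 * real (n choose i) / (m * exp 1 * (ln (real n) - 1))" by (simp add: ac_simps)
  finally show ?thesis unfolding m_def .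
qed

lemma sum_upto_half_split:
  fixes m :: nat
  assumes "0 < m"
  shows "(\<Sum>j = 1..m div 2. f j) = (\<Sum>j = 1..(m - 1) div 2. f j) + (if even m then f (m div 2) else 0)"
proof (cases "even m")
  case True
  then have "m div 2 = Suc ((m - 1) div 2)" using assms by (auto elim!: evenE)
  then show ?thesis using True by simp
next
  case False
  then have "(m - 1) div 2 = m div 2" by (auto elim!: oddE)
  then show ?thesis using False by simp
qed

lemma lagr_row_le:
  fixes a b :: real
  assumes n: "i + 4 \<le> n" and a: "0 < a" "a \<le> 1" and b: "0 < b" "b \<le> 1"
  defines "lam \<equiv> ((real n - (a + b)) / real n, a / real n, b / real n)"
  shows "(\<Sum>j = 1..(n - i - 1) div 2. \<bar>lagr n (i, j, n - i - j) lam\<bar>) + (1 - eps n i) / 2 * pfrak n lam i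
    \<le> 2 * real (n choose i) / (real (n - i) * exp 1 * (ln (real n) - 1))"
    (is "?row \<le> ?K")
proof -
  define m where "m = n - i"
  define T where "T j = \<bar>lagr n (i, j, m - j) lam\<bar>" for j
  have m: "4 \<le> m" using n unfolding m_def by simp
  have T: "T j = \<bar>a gchoose j\<bar> * (\<bar>(real n - (a + b)) gchoose i\<bar> * \<bar>b gchoose (m - j)\<bar>)" for j
    using n unfolding T_def lam_def lagr_def by (simp add: lfac_eq_gbinomial abs_mult)
  have centre: "(1 - eps n i) / 2 * pfrak n lam i \<le> (if even m then T (m div 2) else 0)"
  proof (cases "even m")
    case True
    then have "m - m div 2 = m div 2" by (auto elim!: evenE)
    then show ?thesis using True unfolding eps_def pfrak_def T_def m_def by simp
  qed (simp add: pfrak_def m_def)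
  have "?row = (\<Sum>j = 1..(m - 1) div 2. T j) + (1 - eps n i) / 2 * pfrak n lam i"
    unfolding T_def m_def by simp
  also have "\<dots> \<le> (\<Sum>j = 1..(m - 1) div 2. T j) + (if even m then T (m div 2) else 0)"
    using centre by simp
  also have "\<dots> = (\<Sum>j = 1..m div 2. T j)"
    using m sum_upto_half_split[of m T] by simp
  also have "\<dots> \<le> (\<Sum>j = 1..m div 2. \<bar>a gchoose j\<bar> * ?K)"
  proof (rule sum_mono)
    fix j assume "j \<in> {1..m div 2}"
    then have "real (n - i) \<le> 2 * real (n - i - j)" unfolding m_def by auto
    then have "\<bar>(real n - (a + b)) gchoose i\<bar> * \<bar>b gchoose (n - i - j)\<bar> \<le> ?K"
      using a b by (intro abs_gbinomial_corner_le[OF n]) auto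
    then show "T j \<le> \<bar>a gchoose j\<bar> * ?K"
      unfolding T m_def by (intro mult_left_mono) auto
  qed
  also have "\<dots> = (\<Sum>j = 1..m div 2. \<bar>a gchoose j\<bar>) * ?K" by (rule sum_distrib_right[symmetric])
  also have "\<dots> \<le> ?K"
  proof (rule mult_left_le_one_le)
    have "1 < ln (real n)" using exp_le n by (simp add: one_less_ln)
    then show "0 \<le> ?K" by simp
  qed (use sum_abs_gbinomial_le_1[OF a] in auto)
  finally show ?thesis .
qed

lemma lagr_swap: "lagr n (i, j, k) (x, y, z) = lagr n (i, k, j) (x, z, y)"
  by (simp add: lagr_def)

lemma pfrak_swap: "pfrak n (x, y, z) i = pfrak n (x, z, y) i"
  by (simp add: pfrak_def lagr_def mult_ac)

lemma ln_2_less_0_73: "ln 2 < (0.73 :: real)"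
proof -
  have "1.4316 \<le> exp (0.365 :: real)"
    using exp_lower_Taylor_quadratic[of "0.365 :: real"] by (simp add: power2_eq_square)
  then have "1.4316 * 1.4316 \<le> exp (0.365 :: real) * exp 0.365" by (intro mult_mono) auto
  then have "2 < exp (0.73 :: real)" by (simp add: exp_add[symmetric])
  then have "ln 2 < ln (exp (0.73 :: real))" by (subst ln_less_cancel_iff) auto
  then show ?thesis by simp
qed

definition C0 :: real where
  "C0 = ((ln 2)\<^sup>2 + 12 * ln 2 + 28) / (4 * ln 2 + 12)"

lemma C0_bounds: "2 \<le> C0" "C0 < 2.5"
proof -
  define x :: real where "x = ln 2"
  have x: "0 < x" "x < 0.73" unfolding x_def using ln_2_less_0_73 by auto
  have "2 * (4 * x + 12) \<le> x\<^sup>2 + 12 * x + 28"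
    using zero_le_power2[of "x + 2"] by (simp add: power2_eq_square algebra_simps)
  then show "2 \<le> C0" using x unfolding C0_def x_def[symmetric] by (simp add: pos_le_divide_eq)
  have "x * x < 0.73 * 0.73" using x by (intro mult_strict_mono) auto
  then have "x\<^sup>2 + 12 * x + 28 < 2.5 * (4 * x + 12)" using x by (simp add: power2_eq_square)
  then show "C0 < 2.5" using x unfolding C0_def x_def[symmetric] by (simp add: pos_divide_less_eq)
qed

lemma binomial_div_le_C0_div:
  assumes "i + 4 \<le> n"
  shows "2 * real (n choose i) / (real (n - i) * exp 1 * (ln (real n) - 1))
    \<le> C0 / (exp 1 * (ln (real n) - 1)) * (real (n choose (n - i)) * (1 / (real (n - i) - 1)))"
proof -
  define m where "m = real (n - i)"
  define L where "L = exp 1 * (ln (real n) - 1)"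
  have m: "4 \<le> m" using assms unfolding m_def by auto
  have "1 < ln (real n)" using exp_le assms by (simp add: one_less_ln)
  then have L: "0 < L" unfolding L_def by simp
  have "2 * real (n choose i) / (m * exp 1 * (ln (real n) - 1)) = real (n choose i) * (2 / m) / L"
    unfolding L_def by (simp add: mult.assoc)
  also have "\<dots> \<le> real (n choose i) * (C0 / (m - 1)) / L"
    using C0_bounds(1) m L by (intro divide_right_mono mult_left_mono frac_le) auto
  also have "\<dots> = C0 / L * (real (n choose (n - i)) * (1 / (m - 1)))"
    using assms by (simp add: binomial_symmetric[of i n, symmetric] mult.commute)
  finally show ?thesis unfolding m_def L_def .
qed

lemma lagr_row_le_C0:
  fixes a b :: real
  assumes "i + 4 \<le> n" and "0 < a" "a \<le> 1" and "0 < b" "b \<le> 1"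
  defines "lam \<equiv> ((real n - (a + b)) / real n, a / real n, b / real n)"
  shows "(\<Sum>j = 1..(n - i - 1) div 2. \<bar>lagr n (i, j, n - i - j) lam\<bar>) + (1 - eps n i) / 2 * pfrak n lam i
    \<le> C0 / (exp 1 * (ln (real n) - 1)) * (real (n choose (n - i)) * (1 / (real (n - i) - 1)))"
  using order_trans[OF lagr_row_le binomial_div_le_C0_div] assms by simp

theorem lemma22:
  fixes n :: nat and a1 a2 a3 :: real
  assumes n4: "n \<ge> 4"
    and a2: "0 < a2" "a2 < 1"
    and a3: "0 < a3" "a3 < 1"
    and a1: "a1 = 1 - a2 - a3"
  shows "let lam = ((real n - 1 + a1) / real n, a2 / real n, a3 / real n);
             C0 = ((ln 2)^2 + 12 * ln 2 + 28) / (4 * ln 2 + 12);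
             sigma1 = (\<Sum>i1 = 0..n - 4.
               (\<Sum>i2 = 1..(n - i1 - 1) div 2. \<bar>lagr n (i1, i2, n - i1 - i2) lam\<bar>)
               + (1 - eps n i1) / 2 * pfrak n lam i1);
             sigma2 = (\<Sum>i1 = 0..n - 4.
               (\<Sum>i3 = 1..(n - i1 - 1) div 2. \<bar>lagr n (i1, n - i1 - i3, i3) lam\<bar>)
               + (1 - eps n i1) / 2 * pfrak n lam i1);
             B = C0 / (exp 1 * (ln (real n) - 1)) *
               (\<Sum>i1 = 0..n - 4. real (n choose (n - i1)) * (1 / (real (n - i1) - 1)))
         in sigma1 \<le> B \<and> sigma2 \<le> B \<and> C0 < 2.5"
proof -
  define x where "x = (real n - (a2 + a3)) / real n"
  define row_bound where "row_bound i = C0 / (exp 1 * (ln (real n) - 1))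
    * (real (n choose (n - i)) * (1 / (real (n - i) - 1)))" for i
  have row1: "(\<Sum>j = 1..(n - i - 1) div 2. \<bar>lagr n (i, j, n - i - j) (x, a2 / n, a3 / n)\<bar>)
      + (1 - eps n i) / 2 * pfrak n (x, a2 / n, a3 / n) i \<le> row_bound i"
    if "i \<in> {0..n - 4}" for i
  proof -
    have "i + 4 \<le> n" using that n4 by auto
    then show ?thesis using lagr_row_le_C0[of i n a2 a3] a2 a3 unfolding x_def row_bound_def by simp
  qed
  have row2: "(\<Sum>j = 1..(n - i - 1) div 2. \<bar>lagr n (i, n - i - j, j) (x, a2 / n, a3 / n)\<bar>)
      + (1 - eps n i) / 2 * pfrak n (x, a2 / n, a3 / n) i \<le> row_bound i"
    if "i \<in> {0..n - 4}" for i
  proof -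
    have "i + 4 \<le> n" using that n4 by auto
    moreover have "(real n - (a3 + a2)) / real n = x" unfolding x_def by (simp add: add.commute)
    ultimately show ?thesis using lagr_row_le_C0[of i n a3 a2] a2 a3
      unfolding row_bound_def lagr_swap[of n i _ _ x "a2 / n" "a3 / n"] pfrak_swap[of n x "a2 / n" "a3 / n"]
      by simp
  qed
  have x_eq: "(real n - 1 + a1) / real n = x" using a1 unfolding x_def by simp
  show ?thesis
    unfolding Let_def x_eq C0_def[symmetric] sum_distrib_left row_bound_def[symmetric]
    by (intro conjI sum_mono row1 row2 C0_bounds(2))
qed

end
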